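(* If the algorithm Classifier outputs "Yes" on input configuration $G$, then $G$ is a feasible configuration.
   Context: Model. A configuration is a finite simple undirected connected graph $G$ with $n$ nodes, each node $v$ tagged with a non-negative integer $t_v$ (wakeup tag); smallest tag $0$, span $\sigma$ = largest tag. Nodes are anonymous and communicate in synchronous global rounds. A node $v$ wakes up in the first global round $r\le t_v$ in which it receives a message, if any, and otherwise in global round $t_v$; its local clock is $0$ in its wakeup round, it acts from local round $1$, and nodes do not know the global clock. In each round a node transmits a message to all neighbours, listens, or terminates. A listening node receives $M$ if exactly one neighbour transmits ($M$), hears collision noise (distinct from silence and messages) if at least two neighbours transmit, and silence otherwise; a transmitting node hears nothing. A DRIP is a common function mapping a node's history (what it heard in each local round $0,\ldots,i-1$, including whether/by which message it was woken) to its action in local round $i\ge1$, with every node eventually terminating permanently; a decision function maps each node's final history to $\{0,1\}$; a dedicated leader election algorithm for $G$ is a DRIP plus decision function such that exactly one node of $G$ outputs $1$; $G$ is feasible if one exists. Algorithm Classifier (centralized, input $G$): maintains a partition of the nodes into classes $\mathrm{class}(v)\in\{1,\ldots,\mathit{numClasses}\}$, initially all in class $1$. One iteration: for each node $v$, its label $L_v$ is the set of triples obtained as follows: for each neighbour $w$ with $\mathrm{class}(w)\ne\mathrm{class}(v)$ or $t_w\ne t_v$ form the pair $(\mathrm{class}(w),\sigma+1+t_w-t_v)$; for each distinct pair $(a,b)$ so formed, $L_v$ contains $(a,b,1)$ if exactly one neighbour yields it and $(a,b,* )$ otherwise. Then the partition is refined: two nodes share a new class iff they shared a class before and have equal labels.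 Main loop: for $i=1,\ldots,\lceil n/2\rceil$: record $\mathit{old}=\mathit{numClasses}$; do one iteration; if some class has exactly one node, output "Yes" and stop; else if the number of classes equals $\mathit{old}$, output "No" and stop. *)

theory Defs
  imports Main
begin

definition config :: "'a set \<Rightarrow> ('a \<Rightarrow> 'a \<Rightarrow> bool) \<Rightarrow> ('a \<Rightarrow> nat) \<Rightarrow> bool" where
  "config V E t \<longleftrightarrow> finite V \<and> V \<noteq> {} \<and>
     (\<forall>u v. E u v \<longrightarrow> u \<in> V \<and> v \<in> V) \<and>
     (\<forall>u v. E u v \<longrightarrow> E v u) \<and> (\<forall>v. \<not> E v v) \<and>
     (\<forall>u\<in>V. \<forall>v\<in>V. E\<^sup>*\<^sup>* u v) \<and>
     (\<exists>v\<in>V. t v = 0)"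

definition span :: "'a set \<Rightarrow> ('a \<Rightarrow> nat) \<Rightarrow> nat" where
  "span V t = Max (t ` V)"

text \<open>What a node hears in a local round: silence, collision noise, a message (messages are
  natural numbers), or nothing (when it transmitted). In local round 0 (the wakeup round)
  the entry is Heard m if the node was woken by message m, otherwise what it heard in the
  spontaneous wakeup round (Silence or Noise).\<close>
datatype obs = Silence | Noise | Heard nat | Nothing

datatype action = Transmit nat | Listen | Terminate

datatype nstate = Asleep | Awake "obs list" | Done "obs list"

fun tmsg :: "action \<Rightarrow> nat option" where
  "tmsg (Transmit m) = Some m"
| "tmsg _ = None"

text \<open>Action of node w in the current global round (an awake node with history h of length i
  acts in local round i; asleep and terminated nodes do not transmit).\<close>
definition act :: "(obs list \<Rightarrow> action) \<Rightarrow> ('a \<Rightarrow> nstate) \<Rightarrow> 'a \<Rightarrow> action" where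
  "act P s w = (case s w of Awake h \<Rightarrow> P h | _ \<Rightarrow> Listen)"

definition transmitters ::
  "'a set \<Rightarrow> ('a \<Rightarrow> 'a \<Rightarrow> bool) \<Rightarrow> (obs list \<Rightarrow> action) \<Rightarrow> ('a \<Rightarrow> nstate) \<Rightarrow> 'a \<Rightarrow> 'a set" where
  "transmitters V E P s v = {w \<in> V. E v w \<and> tmsg (act P s w) \<noteq> None}"

definition heard ::
  "'a set \<Rightarrow> ('a \<Rightarrow> 'a \<Rightarrow> bool) \<Rightarrow> (obs list \<Rightarrow> action) \<Rightarrow> ('a \<Rightarrow> nstate) \<Rightarrow> 'a \<Rightarrow> obs" where
  "heard V E P s v =
     (let T = transmitters V E P s v in
      if T = {} then Silence
      else if card T = 1 then Heard (the (tmsg (act P s (the_elem T))))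
      else Noise)"

definition step ::
  "'a set \<Rightarrow> ('a \<Rightarrow> 'a \<Rightarrow> bool) \<Rightarrow> ('a \<Rightarrow> nat) \<Rightarrow> (obs list \<Rightarrow> action) \<Rightarrow> nat
     \<Rightarrow> ('a \<Rightarrow> nstate) \<Rightarrow> ('a \<Rightarrow> nstate)" where
  "step V E t P r s = (\<lambda>v.
     case s v of
       Asleep \<Rightarrow> (case heard V E P s v of
                    Heard m \<Rightarrow> Awake [Heard m]
                  | ob \<Rightarrow> (if t v = r then Awake [ob] else Asleep))
     | Awake h \<Rightarrow> (case P h of
                    Transmit m \<Rightarrow> Awake (h @ [Nothing])
                  | Listen \<Rightarrow> Awake (h @ [heard V E P s v])
                  | Terminate \<Rightarrow> Done h)
     | Done h \<Rightarrow> Done h)"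

text \<open>run r = global state after global rounds 0, ..., r-1.\<close>
primrec run ::
  "'a set \<Rightarrow> ('a \<Rightarrow> 'a \<Rightarrow> bool) \<Rightarrow> ('a \<Rightarrow> nat) \<Rightarrow> (obs list \<Rightarrow> action) \<Rightarrow> nat \<Rightarrow> ('a \<Rightarrow> nstate)" where
  "run V E t P 0 = (\<lambda>v. Asleep)"
| "run V E t P (Suc r) = step V E t P r (run V E t P r)"

definition elects ::
  "'a set \<Rightarrow> ('a \<Rightarrow> 'a \<Rightarrow> bool) \<Rightarrow> ('a \<Rightarrow> nat) \<Rightarrow> (obs list \<Rightarrow> action) \<Rightarrow> (obs list \<Rightarrow> bool) \<Rightarrow> bool" where
  "elects V E t P D \<longleftrightarrow>
     (\<exists>r. (\<forall>v\<in>V. \<exists>h. run V E t P r v = Done h) \<and>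
          (\<exists>!v. v \<in> V \<and> (\<exists>h. run V E t P r v = Done h \<and> D h)))"

definition feasible :: "'a set \<Rightarrow> ('a \<Rightarrow> 'a \<Rightarrow> bool) \<Rightarrow> ('a \<Rightarrow> nat) \<Rightarrow> bool" where
  "feasible V E t \<longleftrightarrow> (\<exists>P D. elects V E t P D)"

text \<open>Classes are represented by the blocks of the partition: cls v is the class of v.\<close>
datatype mult = One | Many

definition cpair :: "'a set \<Rightarrow> ('a \<Rightarrow> nat) \<Rightarrow> ('a \<Rightarrow> 'a set) \<Rightarrow> 'a \<Rightarrow> 'a \<Rightarrow> 'a set \<times> int" where
  "cpair V t cls v w = (cls w, int (span V t) + 1 + int (t w) - int (t v))"

definition contrib :: "'a set \<Rightarrow> ('a \<Rightarrow> 'a \<Rightarrow> bool) \<Rightarrow> ('a \<Rightarrow> nat) \<Rightarrow> ('a \<Rightarrow> 'a set) \<Rightarrow> 'a \<Rightarrow> 'a set" where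
  "contrib V E t cls v = {w \<in> V. E v w \<and> (cls w \<noteq> cls v \<or> t w \<noteq> t v)}"

definition label :: "'a set \<Rightarrow> ('a \<Rightarrow> 'a \<Rightarrow> bool) \<Rightarrow> ('a \<Rightarrow> nat) \<Rightarrow> ('a \<Rightarrow> 'a set) \<Rightarrow> 'a
     \<Rightarrow> ('a set \<times> int \<times> mult) set" where
  "label V E t cls v =
     {(a, b, if card {w \<in> contrib V E t cls v. cpair V t cls v w = (a, b)} = 1 then One else Many)
      | a b. \<exists>w \<in> contrib V E t cls v. cpair V t cls v w = (a, b)}"

definition refine :: "'a set \<Rightarrow> ('a \<Rightarrow> 'a \<Rightarrow> bool) \<Rightarrow> ('a \<Rightarrow> nat) \<Rightarrow> ('a \<Rightarrow> 'a set) \<Rightarrow> ('a \<Rightarrow> 'a set)" where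
  "refine V E t cls = (\<lambda>v. {u \<in> cls v. label V E t cls u = label V E t cls v})"

definition classes :: "'a set \<Rightarrow> ('a \<Rightarrow> 'a \<Rightarrow> bool) \<Rightarrow> ('a \<Rightarrow> nat) \<Rightarrow> nat \<Rightarrow> ('a \<Rightarrow> 'a set)" where
  "classes V E t k = (refine V E t ^^ k) (\<lambda>v. V)"

definition numClasses :: "'a set \<Rightarrow> ('a \<Rightarrow> 'a \<Rightarrow> bool) \<Rightarrow> ('a \<Rightarrow> nat) \<Rightarrow> nat \<Rightarrow> nat" where
  "numClasses V E t k = card (classes V E t k ` V)"

definition has_singleton :: "'a set \<Rightarrow> ('a \<Rightarrow> 'a \<Rightarrow> bool) \<Rightarrow> ('a \<Rightarrow> nat) \<Rightarrow> nat \<Rightarrow> bool" where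
  "has_singleton V E t k \<longleftrightarrow> (\<exists>v\<in>V. card (classes V E t k v) = 1)"

text \<open>Classifier outputs Yes: at some iteration i in 1..ceil(n/2) a singleton class appears,
  and no earlier iteration stopped (no singleton class, and the number of classes changed).\<close>
definition classifier_yes :: "'a set \<Rightarrow> ('a \<Rightarrow> 'a \<Rightarrow> bool) \<Rightarrow> ('a \<Rightarrow> nat) \<Rightarrow> bool" where
  "classifier_yes V E t \<longleftrightarrow>
     (\<exists>i. 1 \<le> i \<and> i \<le> (card V + 1) div 2 \<and> has_singleton V E t i \<and>
          (\<forall>j. 1 \<le> j \<and> j < i \<longrightarrow>
               \<not> has_singleton V E t j \<and> numClasses V E t j \<noteq> numClasses V E t (j - 1)))"

end

theory Submission
  imports Defs
begin

text \<open>
  The refinement performed by the classifier can be simulated by a protocol in which each node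
  learns its own class after every iteration. No node transmits before global round \<open>\<sigma> + 1\<close>,
  so all nodes wake up spontaneously and local round \<open>L\<close> of \<open>v\<close> is global round \<open>t v + L\<close>.
  Phase \<open>j\<close> consists of one block of \<open>2\<sigma> + 1\<close> rounds per class \<open>C\<close> of iteration \<open>j\<close>, and
  every node of \<open>C\<close> transmits in the middle round of that block. A node \<open>v\<close> listening at
  offset \<open>e\<close> of the block hears exactly its neighbours \<open>w \<in> C\<close> with \<open>t w - t v = e - \<sigma>\<close>;
  silence, a message or noise tell it whether there are none, one or several of them, which
  is precisely the label entry \<open>(C, \<sigma> + 1 + t w - t v)\<close>. Knowing the configuration, a node
  thus recomputes its class after each phase, and once a singleton class has appeared its member
  elects itself.
\<close>

lemma mult_add_eq_imp_eq:
  fixes a b x y W :: nat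
  assumes eq: "a * W + x = b * W + y" and "x < W + y" and "y < W + x"
  shows "a = b \<and> x = y"
proof -
  have "\<not> a < b" if "a * W + x = b * W + y" "x < W + y" for a b x y :: nat
  proof
    assume "a < b"
    then have "a * W + W \<le> b * W"
      using mult_le_mono1[of "Suc a" b W] by simp
    with that show False by linarith
  qed
  then have "a = b" using assms by (metis linorder_neqE_nat)
  with eq show ?thesis by simp
qed

definition signal :: "'a set \<Rightarrow> obs" where
  "signal T = (if T = {} then Silence else if card T = 1 then Heard 0 else Noise)"

lemma signal_eq_iff:
  "signal S = signal T \<longleftrightarrow> (S = {} \<longleftrightarrow> T = {}) \<and> (card S = 1 \<longleftrightarrow> card T = 1)"
  unfolding signal_def by auto

definition label_nbrs ::
  "'a set \<Rightarrow> ('a \<Rightarrow> 'a \<Rightarrow> bool) \<Rightarrow> ('a \<Rightarrow> nat) \<Rightarrow> ('a \<Rightarrow> 'a set) \<Rightarrow> 'a \<Rightarrow>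
    'a set \<times> int \<Rightarrow> 'a set"
  where "label_nbrs V E t cls v p = {w \<in> contrib V E t cls v. cpair V t cls v w = p}"

lemma label_nbrs_eq:
  "label_nbrs V E t cls v (C, int e + 1) =
     {w \<in> V. E v w \<and> cls w = C \<and> t w + span V t = t v + e \<and>
        \<not> (C = cls v \<and> e = span V t)}"
  unfolding label_nbrs_def contrib_def cpair_def by auto

lemma mem_label_iff:
  "(a, b, m) \<in> label V E t cls v \<longleftrightarrow>
     label_nbrs V E t cls v (a, b) \<noteq> {} \<and>
     m = (if card (label_nbrs V E t cls v (a, b)) = 1 then One else Many)"
  unfolding label_def label_nbrs_def by auto

lemma label_eq_iff_signal:
  "label V E t cls u = label V E t cls v \<longleftrightarrow>
     (\<forall>p. signal (label_nbrs V E t cls u p) = signal (label_nbrs V E t cls v p))"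
proof -
  have entry: "(\<forall>m. (a, b, m) \<in> label V E t cls u \<longleftrightarrow> (a, b, m) \<in> label V E t cls v) \<longleftrightarrow>
      signal (label_nbrs V E t cls u (a, b)) = signal (label_nbrs V E t cls v (a, b))" for a b
    unfolding mem_label_iff signal_eq_iff by (auto split: if_splits)
  show ?thesis
    unfolding set_eq_iff by (auto simp: entry[symmetric])
qed

definition partition_map :: "'a set \<Rightarrow> ('a \<Rightarrow> 'a set) \<Rightarrow> bool" where
  "partition_map V cls \<longleftrightarrow> (\<forall>v\<in>V. v \<in> cls v \<and> cls v \<subseteq> V \<and> (\<forall>u\<in>cls v. cls u = cls v))"

lemma partition_map_refine:
  assumes "partition_map V cls"
  shows "partition_map V (refine V E t cls)"
  unfolding partition_map_def
proof (intro ballI conjI)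
  fix v assume v: "v \<in> V"
  have cls: "v \<in> cls v" "cls v \<subseteq> V" "\<And>u. u \<in> cls v \<Longrightarrow> cls u = cls v"
    using assms v unfolding partition_map_def by blast+
  show "v \<in> refine V E t cls v" "refine V E t cls v \<subseteq> V"
    using cls(1,2) unfolding refine_def by auto
  fix u assume "u \<in> refine V E t cls v"
  then have "cls u = cls v" "label V E t cls u = label V E t cls v"
    using cls(3) unfolding refine_def by auto
  then show "refine V E t cls u = refine V E t cls v"
    unfolding refine_def by simp
qed

lemma partition_map_classes: "partition_map V (classes V E t k)"
proof (induction k)
  case 0
  show ?case unfolding partition_map_def classes_def by simp
next
  case (Suc k)
  then show ?case unfolding classes_def by (simp add: partition_map_refine)
qed

lemma partition_map_Min_image_inj:
  assumes "finite V" "partition_map V cls" "inj_on f V" "v \<in> V" "w \<in> V"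
    and "Min (f ` cls v) = Min (f ` cls w)"
  shows "cls v = cls w"
proof -
  have Min_in: "\<exists>x\<in>cls u. f x = Min (f ` cls u)" if "u \<in> V" for u
  proof -
    have "finite (cls u)" "u \<in> cls u"
      using assms(1,2) that finite_subset unfolding partition_map_def by blast+
    then show ?thesis using Min_in[of "f ` cls u"] by fastforce
  qed
  obtain x y where "x \<in> cls v" "y \<in> cls w" "f x = f y"
    using Min_in[OF assms(4)] Min_in[OF assms(5)] assms(6) by metis
  moreover have "x = y"
    using calculation assms(2-5) unfolding partition_map_def by (metis inj_on_eq_iff subsetD)
  ultimately show ?thesis using assms(2,4,5) unfolding partition_map_def by metis
qed

fun as_heard :: "obs \<Rightarrow> obs" where
  "as_heard Nothing = Silence"
| "as_heard ob = ob"

locale classifier_simulation =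
  fixes V :: "'a set" and E :: "'a \<Rightarrow> 'a \<Rightarrow> bool" and t :: "'a \<Rightarrow> nat"
    and i :: nat and idx :: "'a \<Rightarrow> nat"
  assumes finite_V: "finite V"
    and idx_bij: "bij_betw idx V {0..<card V}"
begin

abbreviation "\<sigma> \<equiv> span V t"
abbreviation "n \<equiv> card V"
abbreviation "W \<equiv> 2 * \<sigma> + 1"
abbreviation "cl \<equiv> classes V E t"

lemma tag_le_span: "v \<in> V \<Longrightarrow> t v \<le> \<sigma>"
  unfolding span_def using finite_V by simp

lemma
  assumes "v \<in> V"
  shows cl_self: "v \<in> cl j v" and cl_subset: "cl j v \<subseteq> V"
  using partition_map_classes[of V E t j] assms unfolding partition_map_def by blast+

lemma Min_idx_cl_less: "v \<in> V \<Longrightarrow> Min (idx ` cl j v) < n"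
proof -
  assume v: "v \<in> V"
  have "finite (cl j v)" using cl_subset[OF v] finite_V finite_subset by blast
  then have "Min (idx ` cl j v) \<in> idx ` cl j v" using cl_self[OF v] by (intro Min_in) auto
  also have "\<dots> \<subseteq> idx ` V" using cl_subset[OF v] by blast
  finally show ?thesis using idx_bij unfolding bij_betw_def by auto
qed

lemma Min_idx_cl_inj:
  "v \<in> V \<Longrightarrow> w \<in> V \<Longrightarrow> Min (idx ` cl j v) = Min (idx ` cl j w) \<Longrightarrow> cl j v = cl j w"
  using partition_map_Min_image_inj[OF finite_V partition_map_classes
      bij_betw_imp_inj_on[OF idx_bij]] .

definition phase_start :: "nat \<Rightarrow> nat" where
  "phase_start j = 1 + j * n * W"

definition slot :: "nat \<Rightarrow> 'a set \<Rightarrow> nat" where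
  "slot j C = phase_start j + Min (idx ` C) * W"

lemma phase_start_mono: "j \<le> j' \<Longrightarrow> phase_start j \<le> phase_start j'"
  unfolding phase_start_def by (intro add_left_mono mult_le_mono1)

lemma slot_in_phase:
  assumes "v \<in> V" "e < W"
  shows "phase_start j \<le> slot j (cl j v) + e" and "slot j (cl j v) + e < phase_start (Suc j)"
proof -
  show "phase_start j \<le> slot j (cl j v) + e" unfolding slot_def by simp
  have "slot j (cl j v) + e < phase_start j + Suc (Min (idx ` cl j v)) * W"
    using assms(2) unfolding slot_def by simp
  also have "\<dots> \<le> phase_start j + n * W"
    by (intro add_left_mono mult_le_mono1 Suc_leI Min_idx_cl_less assms(1))
  also have "\<dots> = phase_start (Suc j)" unfolding phase_start_def by (simp add: algebra_simps)
  finally show "slot j (cl j v) + e < phase_start (Suc j)" .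
qed

lemma slot_add_eq_iff:
  assumes "v \<in> V" "w \<in> V" "x < W + y" "y < W + x"
  shows "slot j (cl j v) + x = slot j' (cl j' w) + y \<longleftrightarrow> j = j' \<and> cl j v = cl j w \<and> x = y"
proof
  assume eq: "slot j (cl j v) + x = slot j' (cl j' w) + y"
  let ?s = "Min (idx ` cl j v)" and ?s' = "Min (idx ` cl j' w)"
  have "(j * n + ?s) * W + x = (j' * n + ?s') * W + y"
    using eq unfolding slot_def phase_start_def by algebra
  then have "j * n + ?s = j' * n + ?s'" and "x = y"
    using mult_add_eq_imp_eq assms(3,4) by blast+
  moreover have "?s < n + ?s'" "?s' < n + ?s"
    using Min_idx_cl_less assms(1,2) by (simp_all add: trans_less_add1)
  ultimately have "j = j'" "?s = ?s'"
    using mult_add_eq_imp_eq[of j n ?s j' ?s'] by blast+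
  then show "j = j' \<and> cl j v = cl j w \<and> x = y"
    using Min_idx_cl_inj assms(1,2) \<open>x = y\<close> by blast
qed auto

definition transmits :: "'a \<Rightarrow> nat \<Rightarrow> bool" where
  "transmits v L \<longleftrightarrow> (\<exists>j<i. L = slot j (cl j v) + \<sigma>)"

lemma transmits_bounds:
  assumes "transmits v L" "v \<in> V"
  shows "\<sigma> < L" and "L < phase_start i"
proof -
  obtain j where j: "j < i" "L = slot j (cl j v) + \<sigma>"
    using assms(1) unfolding transmits_def by blast
  then show "\<sigma> < L" unfolding slot_def phase_start_def by simp
  have "L < phase_start (Suc j)" using slot_in_phase(2)[OF assms(2), of \<sigma> j] j by simp
  also have "\<dots> \<le> phase_start i" using j by (intro phase_start_mono) simp
  finally show "L < phase_start i" .
qed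

lemma transmits_slot_iff:
  assumes "v \<in> V" "c \<in> V" "j < i" "e < W"
  shows "transmits v (slot j (cl j c) + e) \<longleftrightarrow> e = \<sigma> \<and> cl j c = cl j v"
proof
  assume "transmits v (slot j (cl j c) + e)"
  then obtain j' where "slot j (cl j c) + e = slot j' (cl j' v) + \<sigma>"
    unfolding transmits_def by blast
  then show "e = \<sigma> \<and> cl j c = cl j v" using slot_add_eq_iff[OF assms(2,1)] assms(4) by auto
next
  assume "e = \<sigma> \<and> cl j c = cl j v"
  then show "transmits v (slot j (cl j c) + e)" unfolding transmits_def using assms(3) by auto
qed

lemma transmits_heard_iff:
  assumes "v \<in> V" "w \<in> V" "c \<in> V" "j < i" "e \<le> 2 * \<sigma>"
  shows "transmits w (t v + (slot j (cl j c) + e) - t w) \<longleftrightarrow>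
    cl j w = cl j c \<and> t w + \<sigma> = t v + e"
proof
  assume tx: "transmits w (t v + (slot j (cl j c) + e) - t w)"
  then obtain j' where j': "t v + (slot j (cl j c) + e) - t w = slot j' (cl j' w) + \<sigma>"
    unfolding transmits_def by blast
  have "\<sigma> < t v + (slot j (cl j c) + e) - t w" using transmits_bounds(1)[OF tx assms(2)] .
  then have "slot j (cl j c) + (t v + e) = slot j' (cl j' w) + (t w + \<sigma>)" using j' by linarith
  moreover have "t v + e < W + (t w + \<sigma>)" "t w + \<sigma> < W + (t v + e)"
    using tag_le_span assms(1,2,5) by fastforce+
  ultimately show "cl j w = cl j c \<and> t w + \<sigma> = t v + e"
    using slot_add_eq_iff[OF assms(3,2)] by auto
next
  assume same: "cl j w = cl j c \<and> t w + \<sigma> = t v + e"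
  then have "t v + (slot j (cl j c) + e) = t w + (slot j (cl j w) + \<sigma>)" by simp
  then have "t v + (slot j (cl j c) + e) - t w = slot j (cl j w) + \<sigma>" by simp
  then show "transmits w (t v + (slot j (cl j c) + e) - t w)"
    unfolding transmits_def using assms(4) by auto
qed

definition expected :: "'a \<Rightarrow> nat \<Rightarrow> obs" where
  "expected v L = (if transmits v L then Nothing
     else signal {w \<in> V. E v w \<and> transmits w (t v + L - t w)})"

lemma as_heard_signal [simp]: "as_heard (signal T) = signal T"
  unfolding signal_def by simp

lemma as_heard_expected_slot:
  assumes "v \<in> V" "c \<in> V" "j < i" "e \<le> 2 * \<sigma>"
  shows "as_heard (expected v (slot j (cl j c) + e)) =
    signal (label_nbrs V E t (cl j) v (cl j c, int e + 1))"
proof (cases "cl j c = cl j v \<and> e = \<sigma>")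
  case True
  \<comment> \<open>\<open>v\<close> transmits and records \<open>Nothing\<close>; the label entry is empty because \<open>contrib\<close>
    ignores neighbours of the same class and tag.\<close>
  then have "transmits v (slot j (cl j c) + e)" using transmits_slot_iff assms by simp
  then show ?thesis using True unfolding expected_def label_nbrs_eq signal_def by simp
next
  case False
  have "{w \<in> V. E v w \<and> transmits w (t v + (slot j (cl j c) + e) - t w)} =
      {w \<in> V. E v w \<and> cl j w = cl j c \<and> t w + \<sigma> = t v + e}"
  proof (rule Collect_cong)
    fix w
    show "w \<in> V \<and> E v w \<and> transmits w (t v + (slot j (cl j c) + e) - t w) \<longleftrightarrow>
        w \<in> V \<and> E v w \<and> cl j w = cl j c \<and> t w + \<sigma> = t v + e"
      using transmits_heard_iff[OF assms(1) _ assms(2-4), of w] by blast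
  qed
  also have "\<dots> = label_nbrs V E t (cl j) v (cl j c, int e + 1)"
    using False unfolding label_nbrs_eq by simp
  moreover have "\<not> transmits v (slot j (cl j c) + e)" using transmits_slot_iff assms False by auto
  ultimately show ?thesis unfolding expected_def by simp
qed

lemma label_nbrs_cl_cases:
  assumes "u \<in> V" "label_nbrs V E t (cl j) u p \<noteq> {}"
  obtains C e where "C \<in> cl j ` V" "e \<le> 2 * \<sigma>" "p = (C, int e + 1)"
proof -
  obtain w where w: "w \<in> V" "p = (cl j w, int \<sigma> + 1 + int (t w) - int (t u))"
    using assms(2) unfolding label_nbrs_def contrib_def cpair_def by auto
  moreover have "t u \<le> \<sigma>" "t w \<le> \<sigma>" using tag_le_span assms(1) w(1) by auto
  ultimately show ?thesis using that[of "cl j w" "\<sigma> + t w - t u"] by auto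
qed

lemma label_cl_eq_iff:
  assumes "u \<in> V" "v \<in> V"
  shows "label V E t (cl j) u = label V E t (cl j) v \<longleftrightarrow>
    (\<forall>C\<in>cl j ` V. \<forall>e\<le>2 * \<sigma>.
       signal (label_nbrs V E t (cl j) u (C, int e + 1)) = signal (label_nbrs V E t (cl j) v (C, int e + 1)))"
  unfolding label_eq_iff_signal
proof (intro iffI allI)
  fix p
  assume entries: "\<forall>C\<in>cl j ` V. \<forall>e\<le>2 * \<sigma>.
    signal (label_nbrs V E t (cl j) u (C, int e + 1)) = signal (label_nbrs V E t (cl j) v (C, int e + 1))"
  show "signal (label_nbrs V E t (cl j) u p) = signal (label_nbrs V E t (cl j) v p)"
  proof (cases "\<exists>C\<in>cl j ` V. \<exists>e\<le>2 * \<sigma>. p = (C, int e + 1)")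
    case True
    then show ?thesis using entries by blast
  next
    case False
    then have "label_nbrs V E t (cl j) u p = {}" "label_nbrs V E t (cl j) v p = {}"
      using label_nbrs_cl_cases assms by metis+
    then show ?thesis by simp
  qed
qed blast

primrec decode :: "nat \<Rightarrow> obs list \<Rightarrow> 'a set" where
  "decode 0 h = V"
| "decode (Suc j) h = {u \<in> decode j h. \<forall>C\<in>cl j ` V. \<forall>e\<le>2 * \<sigma>.
      signal (label_nbrs V E t (cl j) u (C, int e + 1)) = as_heard (h ! (slot j C + e))}"

definition hist :: "'a \<Rightarrow> nat \<Rightarrow> obs list" where
  "hist v L = map (expected v) [0..<L]"

lemma decode_hist:
  assumes v: "v \<in> V"
  shows "j \<le> i \<Longrightarrow> phase_start j \<le> L \<Longrightarrow> decode j (hist v L) = cl j v"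
proof (induction j)
  case 0
  show ?case by (simp add: classes_def)
next
  case (Suc j)
  have IH: "decode j (hist v L) = cl j v"
    using Suc phase_start_mono[of j "Suc j"] by simp
  have "hist v L ! (slot j (cl j c) + e) = expected v (slot j (cl j c) + e)"
    if "c \<in> V" "e \<le> 2 * \<sigma>" for c e
    using slot_in_phase(2)[OF that(1), of e j] that(2) Suc.prems(2) unfolding hist_def by simp
  then have "(\<forall>C\<in>cl j ` V. \<forall>e\<le>2 * \<sigma>.
      signal (label_nbrs V E t (cl j) u (C, int e + 1)) = as_heard (hist v L ! (slot j C + e)))
      \<longleftrightarrow> label V E t (cl j) u = label V E t (cl j) v" if "u \<in> V" for u
    using label_cl_eq_iff[OF that v] as_heard_expected_slot[OF v] Suc.prems(1) by auto
  then have "decode (Suc j) (hist v L) = {u \<in> cl j v. label V E t (cl j) u = label V E t (cl j) v}"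
    using IH cl_subset[OF v] by auto
  then show ?case by (simp add: classes_def refine_def)
qed

definition drip :: "obs list \<Rightarrow> action" where
  "drip h = (if phase_start i \<le> length h then Terminate
     else if \<exists>j<i. length h = slot j (decode j h) + \<sigma> then Transmit 0 else Listen)"

lemma drip_hist:
  assumes v: "v \<in> V"
  shows "drip (hist v L) =
    (if phase_start i \<le> L then Terminate else if transmits v L then Transmit 0 else Listen)"
proof -
  have "L = slot j (decode j (hist v L)) + \<sigma> \<longleftrightarrow> L = slot j (cl j v) + \<sigma>" if "j < i" for j
  proof (cases "phase_start j \<le> L")
    case True
    then show ?thesis using decode_hist[OF v] that by simp
  next
    case False
    then show ?thesis unfolding slot_def by auto
  qed
  then show ?thesis unfolding drip_def transmits_def hist_def by auto
qed

definition sim_state :: "nat \<Rightarrow> 'a \<Rightarrow> nstate" where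
  "sim_state r v = (if r \<le> t v then Asleep
     else if r - t v \<le> phase_start i then Awake (hist v (r - t v))
     else Done (hist v (phase_start i)))"

lemma act_sim_state:
  assumes s: "\<forall>w\<in>V. s w = sim_state r w" and w: "w \<in> V"
  shows "tmsg (act drip s w) = (if transmits w (r - t w) then Some 0 else None)"
proof -
  have "\<not> transmits w (r - t w)" if "r \<le> t w \<or> phase_start i \<le> r - t w"
    using transmits_bounds[OF _ w] that by fastforce
  then show ?thesis using s w drip_hist[OF w] unfolding act_def sim_state_def by auto
qed

lemma heard_sim_state:
  assumes s: "\<forall>w\<in>V. s w = sim_state r w"
  shows "heard V E drip s v = signal {w \<in> V. E v w \<and> transmits w (r - t w)}"
proof -
  let ?T = "{w \<in> V. E v w \<and> transmits w (r - t w)}"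
  have T: "transmitters V E drip s v = ?T"
    unfolding transmitters_def using act_sim_state[OF s] by (auto split: if_splits)
  have "tmsg (act drip s (the_elem ?T)) = Some 0" if one: "card ?T = 1"
  proof -
    obtain x where x: "?T = {x}" using card_1_singletonE[OF one] by blast
    then have "x \<in> V \<and> transmits x (r - t x)" by (metis (mono_tags) insertI1 mem_Collect_eq)
    then show ?thesis using x act_sim_state[OF s, of x] by simp
  qed
  then show ?thesis unfolding heard_def signal_def T Let_def by auto
qed

lemma no_transmission_until_span: "r \<le> \<sigma> \<Longrightarrow> w \<in> V \<Longrightarrow> \<not> transmits w (r - t w)"
  using transmits_bounds(1) by fastforce

lemma step_sim_state:
  assumes s: "\<forall>w\<in>V. s w = sim_state r w" and v: "v \<in> V"
  shows "step V E t drip r s v = sim_state (Suc r) v"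
proof -
  have heard: "heard V E drip s v = signal {w \<in> V. E v w \<and> transmits w (r - t w)}"
    by (rule heard_sim_state[OF s])
  have start: "1 \<le> phase_start i" unfolding phase_start_def by simp
  consider (asleep) "r \<le> t v" | (awake) "t v < r" "r - t v < phase_start i"
    | (stop) "t v < r" "r - t v = phase_start i" | (finished) "t v < r" "phase_start i < r - t v"
    by linarith
  then show ?thesis
  proof cases
    case asleep
    have "heard V E drip s v = Silence"
      using no_transmission_until_span[of r] asleep tag_le_span[OF v] unfolding heard signal_def
      by auto
    moreover have "expected v 0 = Silence"
      using no_transmission_until_span[of 0 v] no_transmission_until_span[of "t v"]
        tag_le_span[OF v] v
      unfolding expected_def signal_def by auto
    moreover have "r < t v \<or> r = t v" using asleep by linarith
    ultimately show ?thesis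
      using s v start unfolding step_def sim_state_def hist_def by auto
  next
    case awake
    let ?L = "r - t v"
    have "Suc r - t v = Suc ?L" "t v + ?L = r" using awake by simp_all
    then have "sim_state (Suc r) v = Awake (hist v ?L @ [expected v ?L])"
      using awake unfolding sim_state_def hist_def by simp
    moreover have "s v = Awake (hist v ?L)" using s v awake unfolding sim_state_def by simp
    ultimately show ?thesis
      using awake drip_hist[OF v, of ?L] unfolding step_def heard expected_def by simp
  next
    case stop
    then show ?thesis using s v drip_hist[OF v] unfolding step_def sim_state_def by simp
  next
    case finished
    then show ?thesis using s v unfolding step_def sim_state_def by simp
  qed
qed

lemma run_sim_state: "v \<in> V \<Longrightarrow> run V E t drip r v = sim_state r v"
proof (induction r arbitrary: v)
  case 0
  show ?case by (simp add: sim_state_def)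
next
  case (Suc r)
  then show ?case using step_sim_state by simp
qed

lemma elects_drip:
  assumes v0: "v0 \<in> V" and singleton: "cl i v0 = {v0}"
  shows "elects V E t drip (\<lambda>h. decode i h = cl i v0)"
proof -
  let ?r = "\<sigma> + phase_start i + 1"
  have final: "run V E t drip ?r v = Done (hist v (phase_start i))" if "v \<in> V" for v
  proof -
    have "run V E t drip ?r v = sim_state ?r v" by (rule run_sim_state[OF that])
    also have "\<dots> = Done (hist v (phase_start i))"
      using tag_le_span[OF that] unfolding sim_state_def by simp
    finally show ?thesis .
  qed
  have "decode i (hist v (phase_start i)) = cl i v0 \<longleftrightarrow> v = v0" if "v \<in> V" for v
    using decode_hist[OF that order_refl order_refl] cl_self[OF that] singleton by auto
  then show ?thesis unfolding elects_def using final v0 by (auto intro!: exI[of _ ?r])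
qed

end

theorem lemma8:
  fixes V :: "'a set" and E :: "'a \<Rightarrow> 'a \<Rightarrow> bool" and t :: "'a \<Rightarrow> nat"
  assumes "config V E t"
    and "classifier_yes V E t"
  shows "feasible V E t"
proof -
  obtain i v0 where v0: "v0 \<in> V" and "card (classes V E t i v0) = 1"
    using assms(2) unfolding classifier_yes_def has_singleton_def by blast
  have "finite V" using assms(1) unfolding config_def by blast
  then obtain idx where "bij_betw idx V {0..<card V}"
    using ex_bij_betw_finite_nat by blast
  with \<open>finite V\<close> interpret classifier_simulation V E t i idx
    by unfold_locales
  have "classes V E t i v0 = {v0}"
    using \<open>card (classes V E t i v0) = 1\<close> cl_self[OF v0] by (metis card_1_singletonE singletonD)
  then show ?thesis unfolding feasible_def using elects_drip[OF v0] by blast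
qed

end
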